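(* Let $(T_1\to B_1)$ and $(T_2\to B_2)$ be bars. Then the tensor product $(T_1\to B_1)\otimes(T_2\to B_2)$, as a graded filtered chain complex over $\mathbb{F}_2$, is isomorphic to a direct sum of two bars $(X_1\to Y_1)\oplus(X_2\to Y_2)$, where the grading and filtration level of $Y_1$ are the sums of those of $B_1$ and $B_2$, and the grading and filtration level of $X_2$ are the sums of those of $T_1$ and $T_2$. In particular, one of the two summands is an even bar and the other is an odd bar.
   Context: All complexes are finite-dimensional, graded, filtered chain complexes over $\mathbb{F}_2$ whose differential lowers grading by one and does not increase filtration level. A bar $(T\to B)$ is a two-dimensional such complex with basis elements $T$ and $B$ (each homogeneous of a given grading and filtration level), differential $\partial T = B$ (so it is acyclic), with the filtration level of $B$ strictly less than that of $T$. A bar is even or odd according as the grading of $B$ is even or odd. Tensor products carry the grading and filtration given by summing those of the factors and the differential $\partial(x\otimes y)=\partial x\otimes y + x\otimes\partial y$. *)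

theory Defs
  imports Main
begin

text \<open>A finite-dimensional graded filtered chain complex over F2, presented by a
finite homogeneous basis adapted to the filtration: each basis element has a
grading and a filtration level; a vector is a finite set of basis elements
(F2-linear combination); the filtration level F_p is spanned by the basis
elements of level at most p.  The differential is given on basis elements.\<close>

record 'b fcx =
  basis :: "'b set"
  gr    :: "'b \<Rightarrow> int"
  flt   :: "'b \<Rightarrow> int"
  dif   :: "'b \<Rightarrow> 'b set"

definition lin :: "('a \<Rightarrow> 'b set) \<Rightarrow> 'a set \<Rightarrow> 'b set" where
  "lin f V = {y. odd (card {x \<in> V. y \<in> f x})}"

definition symdiff :: "'a set \<Rightarrow> 'a set \<Rightarrow> 'a set" where
  "symdiff A B = (A - B) \<union> (B - A)"

definition is_cx :: "'b fcx \<Rightarrow> bool" where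
  "is_cx C \<longleftrightarrow> finite (basis C) \<and>
     (\<forall>b \<in> basis C. dif C b \<subseteq> basis C \<and>
        (\<forall>c \<in> dif C b. gr C c = gr C b - 1 \<and> flt C c \<le> flt C b) \<and>
        lin (dif C) (dif C b) = {})"

definition tensor :: "'a fcx \<Rightarrow> 'b fcx \<Rightarrow> ('a \<times> 'b) fcx" where
  "tensor C D = \<lparr> basis = basis C \<times> basis D,
     gr = (\<lambda>(a, b). gr C a + gr D b),
     flt = (\<lambda>(a, b). flt C a + flt D b),
     dif = (\<lambda>(a, b). symdiff ((\<lambda>c. (c, b)) ` dif C a) ((\<lambda>c. (a, c)) ` dif D b)) \<rparr>"

definition dsum :: "'a fcx \<Rightarrow> 'b fcx \<Rightarrow> ('a + 'b) fcx" where
  "dsum C D = \<lparr> basis = Inl ` basis C \<union> Inr ` basis D,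
     gr = case_sum (gr C) (gr D),
     flt = case_sum (flt C) (flt D),
     dif = case_sum (\<lambda>a. Inl ` dif C a) (\<lambda>b. Inr ` dif D b) \<rparr>"

definition piece :: "'b fcx \<Rightarrow> int \<Rightarrow> int \<Rightarrow> 'b set set" where
  "piece C n p = {V. V \<subseteq> basis C \<and> (\<forall>x \<in> V. gr C x = n \<and> flt C x \<le> p)}"

definition filt_iso :: "'a fcx \<Rightarrow> 'b fcx \<Rightarrow> ('a \<Rightarrow> 'b set) \<Rightarrow> bool" where
  "filt_iso C D f \<longleftrightarrow>
     (\<forall>x \<in> basis C. f x \<subseteq> basis D) \<and>
     bij_betw (lin f) (Pow (basis C)) (Pow (basis D)) \<and>
     (\<forall>n p. lin f ` piece C n p = piece D n p) \<and>
     (\<forall>x \<in> basis C. lin (dif D) (f x) = lin f (dif C x))"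

definition isomorphic :: "'a fcx \<Rightarrow> 'b fcx \<Rightarrow> bool" where
  "isomorphic C D \<longleftrightarrow> (\<exists>f. filt_iso C D f)"

definition is_bar :: "'b fcx \<Rightarrow> 'b \<Rightarrow> 'b \<Rightarrow> bool" where
  "is_bar C T B \<longleftrightarrow> is_cx C \<and> T \<noteq> B \<and> basis C = {T, B} \<and>
     dif C T = {B} \<and> dif C B = {} \<and> flt C B < flt C T"

definition even_bar :: "'b fcx \<Rightarrow> 'b \<Rightarrow> 'b \<Rightarrow> bool" where
  "even_bar C T B \<longleftrightarrow> is_bar C T B \<and> even (gr C B)"

definition odd_bar :: "'b fcx \<Rightarrow> 'b \<Rightarrow> 'b \<Rightarrow> bool" where
  "odd_bar C T B \<longleftrightarrow> is_bar C T B \<and> odd (gr C B)"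

end

theory Submission
  imports Defs
begin

text \<open>The tensor product of bars \<open>T\<^sub>1 \<rightarrow> B\<^sub>1\<close> and \<open>T\<^sub>2 \<rightarrow> B\<^sub>2\<close> is a square
  \<open>t \<rightarrow> u + v\<close>, \<open>u \<rightarrow> b\<close>, \<open>v \<rightarrow> b\<close> with \<open>t = T\<^sub>1 \<otimes> T\<^sub>2\<close>, \<open>b = B\<^sub>1 \<otimes> B\<^sub>2\<close> and
  \<open>{u, v} = {T\<^sub>1 \<otimes> B\<^sub>2, B\<^sub>1 \<otimes> T\<^sub>2}\<close>, labelled so that \<open>v\<close> has the lower filtration level.
  In the basis \<open>t, u + v, v, b\<close> the differential is \<open>t \<mapsto> u + v\<close>, \<open>v \<mapsto> b\<close>, and the basis
  stays adapted to the filtration since \<open>u + v\<close> has the level of \<open>u\<close>. So the square is the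
  direct sum of the bars \<open>v \<rightarrow> b\<close> and \<open>t \<rightarrow> u + v\<close>, whose bottoms have adjacent gradings.\<close>

lemma lin_support: "y \<in> lin f V \<Longrightarrow> \<exists>x \<in> V. y \<in> f x"
proof (rule ccontr)
  assume "y \<in> lin f V" and "\<not> (\<exists>x \<in> V. y \<in> f x)"
  then have "{x \<in> V. y \<in> f x} = {}" by blast
  with \<open>y \<in> lin f V\<close> show False by (simp add: lin_def)
qed

lemma lin_empty [simp]: "lin f {} = {}"
  by (simp add: lin_def)

lemma lin_singleton [simp]: "lin f {x} = f x"
proof -
  have "{x' \<in> {x}. y \<in> f x'} = (if y \<in> f x then {x} else {})" for y
    by auto
  then show ?thesis
    by (auto simp: lin_def)
qed

lemma lin_doubleton:
  assumes "a \<noteq> b"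
  shows "lin f {a, b} = symdiff (f a) (f b)"
proof -
  have "{x \<in> {a, b}. y \<in> f x} = (if y \<in> f a then {a} else {}) \<union> (if y \<in> f b then {b} else {})" for y
    by auto
  with assms show ?thesis
    by (auto simp: lin_def symdiff_def)
qed

lemma lin_cong:
  assumes "\<And>x. x \<in> V \<Longrightarrow> f x = g x"
  shows "lin f V = lin g V"
proof -
  have "{x \<in> V. y \<in> f x} = {x \<in> V. y \<in> g x}" for y
    using assms by auto
  then show ?thesis
    by (simp add: lin_def)
qed

lemma lin_singletons: "lin (\<lambda>x. {x}) V = V"
proof -
  have "{x \<in> V. y \<in> {x}} = (if y \<in> V then {y} else {})" for y
    by auto
  then show ?thesis
    by (auto simp: lin_def)
qed

text \<open>Both sides count, modulo 2, the pairs \<open>(x, w)\<close> with \<open>x \<in> V\<close>, \<open>w \<in> f x\<close> and \<open>y \<in> g w\<close>.\<close>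
lemma lin_lin:
  assumes "finite V" and "\<And>x. x \<in> V \<Longrightarrow> finite (f x)"
  shows "lin g (lin f V) = lin (\<lambda>x. lin g (f x)) V"
proof (rule set_eqI)
  fix y
  define W where "W = \<Union> (f ` V)"
  define N where "N w = card {x \<in> V. w \<in> f x}" for w
  define M where "M x = card {w \<in> f x. y \<in> g w}" for x
  have "finite W"
    using assms by (simp add: W_def)
  have "lin f V \<subseteq> W"
    unfolding W_def by (blast dest: lin_support)
  then have "{w \<in> lin f V. y \<in> g w} = {w \<in> {w \<in> W. y \<in> g w}. odd (N w)}"
    by (auto simp: lin_def N_def)
  then have "odd (card {w \<in> lin f V. y \<in> g w}) \<longleftrightarrow> odd (sum N {w \<in> W. y \<in> g w})"
    using \<open>finite W\<close> by (simp add: even_sum_iff)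
  also have "sum N {w \<in> W. y \<in> g w} = (\<Sum>w\<in>{w \<in> W. y \<in> g w}. \<Sum>x\<in>V. if w \<in> f x then 1 else 0)"
    unfolding N_def using assms(1) by (simp add: sum.If_cases Int_def)
  also have "\<dots> = (\<Sum>x\<in>V. \<Sum>w\<in>{w \<in> W. y \<in> g w}. if w \<in> f x then 1 else 0)"
    by (rule sum.swap)
  also have "\<dots> = sum M V"
  proof (rule sum.cong)
    fix x
    assume "x \<in> V"
    then have "{w \<in> W. y \<in> g w} \<inter> {w. w \<in> f x} = {w \<in> f x. y \<in> g w}"
      unfolding W_def by blast
    then show "(\<Sum>w\<in>{w \<in> W. y \<in> g w}. if w \<in> f x then 1 else 0) = M x"
      using \<open>finite W\<close> by (simp add: M_def sum.If_cases Int_def)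
  qed simp
  also have "odd (sum M V) \<longleftrightarrow> odd (card {x \<in> V. y \<in> lin g (f x)})"
    using assms(1) by (simp add: even_sum_iff M_def lin_def)
  finally show "y \<in> lin g (lin f V) \<longleftrightarrow> y \<in> lin (\<lambda>x. lin g (f x)) V"
    by (simp add: lin_def)
qed

lemma lin_in_piece:
  assumes "\<And>x y. x \<in> basis C \<Longrightarrow> y \<in> f x \<Longrightarrow> y \<in> basis D \<and> gr D y = gr C x \<and> flt D y \<le> flt C x"
    and "V \<in> piece C n p"
  shows "lin f V \<in> piece D n p"
  using assms unfolding piece_def by (fastforce dest: lin_support)

lemma filt_isoI:
  assumes "finite (basis C)" and "finite (basis D)"
    and f: "\<And>x y. x \<in> basis C \<Longrightarrow> y \<in> f x \<Longrightarrow> y \<in> basis D \<and> gr D y = gr C x \<and> flt D y \<le> flt C x"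
    and g: "\<And>y x. y \<in> basis D \<Longrightarrow> x \<in> g y \<Longrightarrow> x \<in> basis C \<and> gr C x = gr D y \<and> flt C x \<le> flt D y"
    and gf: "\<And>x. x \<in> basis C \<Longrightarrow> lin g (f x) = {x}"
    and fg: "\<And>y. y \<in> basis D \<Longrightarrow> lin f (g y) = {y}"
    and dif: "\<And>x. x \<in> basis C \<Longrightarrow> lin (dif D) (f x) = lin f (dif C x)"
  shows "filt_iso C D f"
proof -
  have f_fin: "finite (f x)" if "x \<in> basis C" for x
    using f that \<open>finite (basis D)\<close> by (meson finite_subset subsetI)
  have g_fin: "finite (g y)" if "y \<in> basis D" for y
    using g that \<open>finite (basis C)\<close> by (meson finite_subset subsetI)
  have gf_lin: "lin g (lin f V) = V" if "V \<subseteq> basis C" for V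
  proof -
    have "lin g (lin f V) = lin (\<lambda>x. {x}) V"
      using that f_fin gf \<open>finite (basis C)\<close>
      by (simp add: lin_lin finite_subset subset_iff cong: lin_cong)
    then show ?thesis
      by (simp add: lin_singletons)
  qed
  have fg_lin: "lin f (lin g W) = W" if "W \<subseteq> basis D" for W
  proof -
    have "lin f (lin g W) = lin (\<lambda>y. {y}) W"
      using that g_fin fg \<open>finite (basis D)\<close>
      by (simp add: lin_lin finite_subset subset_iff cong: lin_cong)
    then show ?thesis
      by (simp add: lin_singletons)
  qed
  have "lin f ` piece C n p = piece D n p" for n p
  proof
    show "lin f ` piece C n p \<subseteq> piece D n p"
      using f by (blast intro: lin_in_piece)
    show "piece D n p \<subseteq> lin f ` piece C n p"
    proof
      fix W
      assume W: "W \<in> piece D n p"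
      have "lin g W \<in> piece C n p"
        using g W by (rule lin_in_piece)
      moreover have "lin f (lin g W) = W"
        using W fg_lin by (simp add: piece_def)
      ultimately show "W \<in> lin f ` piece C n p"
        by (metis image_eqI)
    qed
  qed
  moreover have "bij_betw (lin f) (Pow (basis C)) (Pow (basis D))"
  proof (rule bij_betw_byWitness[where f' = "lin g"])
    show "lin f ` Pow (basis C) \<subseteq> Pow (basis D)" and "lin g ` Pow (basis D) \<subseteq> Pow (basis C)"
      using f g by (blast dest: lin_support)+
  qed (use gf_lin fg_lin in auto)
  ultimately show ?thesis
    using f dif by (auto simp: filt_iso_def)
qed

definition bool_bar :: "int \<Rightarrow> int \<Rightarrow> int \<Rightarrow> bool fcx" where
  "bool_bar n p q = \<lparr>basis = UNIV, gr = (\<lambda>x. if x then n + 1 else n),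
     flt = (\<lambda>x. if x then p else q), dif = (\<lambda>x. if x then {False} else {})\<rparr>"

lemma is_bar_bool_bar: "q < p \<Longrightarrow> is_bar (bool_bar n p q) True False"
  by (auto simp: is_bar_def is_cx_def bool_bar_def)

lemma is_bar_gr: "is_bar C T B \<Longrightarrow> gr C B = gr C T - 1"
  by (simp add: is_bar_def is_cx_def)

definition is_square :: "'c fcx \<Rightarrow> 'c \<Rightarrow> 'c \<Rightarrow> 'c \<Rightarrow> 'c \<Rightarrow> bool" where
  "is_square C t u v b \<longleftrightarrow> distinct [t, u, v, b] \<and> basis C = {t, u, v, b} \<and>
     dif C t = {u, v} \<and> dif C u = {b} \<and> dif C v = {b} \<and> dif C b = {} \<and>
     gr C u = gr C t - 1 \<and> gr C v = gr C t - 1 \<and> gr C b = gr C t - 2 \<and>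
     flt C u < flt C t \<and> flt C v < flt C t \<and> flt C b < flt C u \<and> flt C b < flt C v"

lemma is_square_swap: "is_square C t u v b \<Longrightarrow> is_square C t v u b"
  by (auto simp: is_square_def insert_commute)

lemma tensor_bars_is_square:
  assumes "is_bar C1 T1 B1" and "is_bar C2 T2 B2"
  shows "is_square (tensor C1 C2) (T1, T2) (T1, B2) (B1, T2) (B1, B2)"
  using assms is_bar_gr[OF assms(1)] is_bar_gr[OF assms(2)]
  by (auto simp: is_square_def is_bar_def tensor_def symdiff_def)

lemma square_isomorphic_dsum_bool_bars:
  assumes sq: "is_square C t u v b" and vu: "flt C v \<le> flt C u"
  shows "isomorphic C (dsum (bool_bar (gr C b) (flt C v) (flt C b)) (bool_bar (gr C u) (flt C t) (flt C u)))"
    (is "isomorphic C ?D")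
proof -
  txt \<open>\<open>Inl True\<close>, \<open>Inl False\<close>, \<open>Inr True\<close>, \<open>Inr False\<close> stand for \<open>v\<close>, \<open>b\<close>, \<open>t\<close>, \<open>u + v\<close>.\<close>
  define f where "f x = (if x = t then {Inr True} else if x = u then {Inl True, Inr False}
    else if x = v then {Inl True} else {Inl False})" for x
  define g :: "bool + bool \<Rightarrow> _" where
    "g = case_sum (\<lambda>y. if y then {v} else {b}) (\<lambda>y. if y then {t} else {u, v})"
  have distinct: "t \<noteq> u" "t \<noteq> v" "t \<noteq> b" "u \<noteq> v" "u \<noteq> b" "v \<noteq> b"
    and basis_C: "basis C = {t, u, v, b}"
    using sq by (auto simp: is_square_def)
  have basis_D: "basis ?D = UNIV"
    by (simp add: dsum_def bool_bar_def UNIV_sum[symmetric])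
  have "filt_iso C ?D f"
  proof (rule filt_isoI[where g = g])
    show "finite (basis C)" and "finite (basis ?D)"
      by (simp_all add: basis_C basis_D)
    show "y \<in> basis ?D \<and> gr ?D y = gr C x \<and> flt ?D y \<le> flt C x" if "x \<in> basis C" "y \<in> f x" for x y
      using that sq vu distinct basis_D by (auto simp: basis_C f_def is_square_def dsum_def bool_bar_def)
    show "x \<in> basis C \<and> gr C x = gr ?D y \<and> flt C x \<le> flt ?D y" if "x \<in> g y" for x y
      using that sq vu by (auto simp: basis_C g_def is_square_def dsum_def bool_bar_def split: sum.splits if_splits)
    show "lin g (f x) = {x}" if "x \<in> basis C" for x
      using that distinct by (auto simp: basis_C f_def g_def lin_doubleton symdiff_def)
    show "lin f (g y) = {y}" for y
      using distinct by (auto simp: f_def g_def lin_doubleton symdiff_def split: sum.splits)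
    show "lin (dif ?D) (f x) = lin f (dif C x)" if "x \<in> basis C" for x
      using that sq distinct
      by (auto simp: basis_C f_def is_square_def dsum_def bool_bar_def lin_doubleton symdiff_def)
  qed
  then show ?thesis
    by (auto simp: isomorphic_def)
qed

lemma square_splits_into_bars:
  assumes "is_square C t u v b"
  shows "\<exists>(D1 :: bool fcx) (D2 :: bool fcx) X1 Y1 X2 Y2.
           is_bar D1 X1 Y1 \<and> is_bar D2 X2 Y2 \<and>
           isomorphic C (dsum D1 D2) \<and>
           gr D1 Y1 = gr C b \<and> flt D1 Y1 = flt C b \<and>
           gr D2 X2 = gr C t \<and> flt D2 X2 = flt C t \<and>
           ((even_bar D1 X1 Y1 \<and> odd_bar D2 X2 Y2) \<or> (odd_bar D1 X1 Y1 \<and> even_bar D2 X2 Y2))"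
proof -
  obtain u' v' where sq: "is_square C t u' v' b" and "flt C v' \<le> flt C u'"
    using assms is_square_swap by (metis linorder_le_cases)
  let ?D1 = "bool_bar (gr C b) (flt C v') (flt C b)"
  let ?D2 = "bool_bar (gr C u') (flt C t) (flt C u')"
  have "isomorphic C (dsum ?D1 ?D2)"
    using sq \<open>flt C v' \<le> flt C u'\<close> by (rule square_isomorphic_dsum_bool_bars)
  moreover have "is_bar ?D1 True False" and "is_bar ?D2 True False"
    using sq by (auto simp: is_square_def intro: is_bar_bool_bar)
  moreover have "gr ?D1 False = gr C b" "flt ?D1 False = flt C b"
    and "gr ?D2 True = gr C t" "flt ?D2 True = flt C t"
    using sq by (simp_all add: is_square_def bool_bar_def)
  moreover have "gr ?D2 False = gr ?D1 False + 1"
    using sq by (simp add: is_square_def bool_bar_def)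
  then have "even (gr ?D1 False) \<and> odd (gr ?D2 False) \<or> odd (gr ?D1 False) \<and> even (gr ?D2 False)"
    by simp
  ultimately show ?thesis
    unfolding even_bar_def odd_bar_def by blast
qed

theorem mainTheorem4:
  fixes C1 :: "'a fcx" and C2 :: "'b fcx"
  assumes "is_bar C1 T1 B1" and "is_bar C2 T2 B2"
  shows "\<exists>(D1 :: bool fcx) (D2 :: bool fcx) X1 Y1 X2 Y2.
           is_bar D1 X1 Y1 \<and> is_bar D2 X2 Y2 \<and>
           isomorphic (tensor C1 C2) (dsum D1 D2) \<and>
           gr D1 Y1 = gr C1 B1 + gr C2 B2 \<and> flt D1 Y1 = flt C1 B1 + flt C2 B2 \<and>
           gr D2 X2 = gr C1 T1 + gr C2 T2 \<and> flt D2 X2 = flt C1 T1 + flt C2 T2 \<and>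
           ((even_bar D1 X1 Y1 \<and> odd_bar D2 X2 Y2) \<or> (odd_bar D1 X1 Y1 \<and> even_bar D2 X2 Y2))"
proof -
  have "is_square (tensor C1 C2) (T1, T2) (T1, B2) (B1, T2) (B1, B2)"
    using assms by (rule tensor_bars_is_square)
  from square_splits_into_bars[OF this] show ?thesis
    by (simp add: tensor_def)
qed

end
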